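(* For each integer $r\ge 2$, the matrix $A'_r$ is $2$-modular.
   Context: An integer matrix $A$ is $\Delta$-modular if the determinant of every $\operatorname{rank}(A)\times\operatorname{rank}(A)$ submatrix has absolute value at most $\Delta$. $D_r$ denotes the $r\times\binom r2$ matrix whose columns are all vectors in $\mathbb{Z}^r$ with exactly two nonzero entries, the first (topmost) equal to $1$ and the second equal to $-1$. $A'_r$ is the $r\times(\binom{r+2}{2}-2)$ matrix $[\,I_r\mid D_r\mid B'_r\,]$, where $B'_r$ is the $r\times(r-1)$ matrix whose first two rows consist entirely of $1$'s, and whose last $r-2$ rows are $[\,-I_{r-2}\mid \mathbf 0\,]$ (i.e., in rows $3,\dots,r$ the first $r-2$ columns form $-I_{r-2}$ and the last column is zero). *)

theory Defs
  imports "Jordan_Normal_Form.DL_Rank_Submatrix"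
begin

definition int_mat_rank :: "int mat \<Rightarrow> nat" where
  "int_mat_rank A = vec_space.rank (dim_row A) (map_mat rat_of_int A)"

definition delta_modular :: "int \<Rightarrow> int mat \<Rightarrow> bool" where
  "delta_modular \<Delta> A \<longleftrightarrow>
     (\<forall>I J. I \<subseteq> {..<dim_row A} \<longrightarrow> J \<subseteq> {..<dim_col A} \<longrightarrow>
        card I = int_mat_rank A \<longrightarrow> card J = int_mat_rank A \<longrightarrow>
        \<bar>det (submatrix A I J)\<bar> \<le> \<Delta>)"

text \<open>Pairs (i,j), i<j<r, in lexicographic order; they index the columns of D_r
  (row indices are 0-based).\<close>
definition pairs_list :: "nat \<Rightarrow> (nat \<times> nat) list" where
  "pairs_list r = [(i, j). i \<leftarrow> [0..<r], j \<leftarrow> [Suc i..<r]]"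

definition D_mat :: "nat \<Rightarrow> int mat" where
  "D_mat r = mat r (r choose 2) (\<lambda>(k, c).
     (let p = pairs_list r ! c in
      if k = fst p then 1 else if k = snd p then -1 else 0))"

text \<open>B'_r: r x (r-1); first two rows all 1; rows 3..r are [-I_{r-2} | 0].\<close>
definition B'_mat :: "nat \<Rightarrow> int mat" where
  "B'_mat r = mat r (r - 1) (\<lambda>(k, c).
     if k < 2 then 1 else if c = k - 2 then -1 else 0)"

definition A'_mat :: "nat \<Rightarrow> int mat" where
  "A'_mat r = mat r (r + (r choose 2) + (r - 1)) (\<lambda>(k, c).
     if c < r then (if k = c then 1 else 0)
     else if c < r + (r choose 2) then D_mat r $$ (k, c - r)
     else B'_mat r $$ (k, c - r - (r choose 2)))"

end

theory Submission
  imports Defs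
begin

(* Call a column a network column if it has at most two nonzero entries and, when it has two,
  they are 1 and -1. Square matrices of network columns have determinant in {-1,0,1}: expand
  along a column with at most one nonzero entry, or, if there is none, the rows sum to zero.
  The columns of I_r and D_r are network columns. The columns of B'_r are e_1 + (e_2 - e_(k+2))
  and pairwise differ by network columns. So in a square submatrix of A'_r, subtracting one
  B'-column from the other B'-columns and splitting it by linearity writes the determinant
  as a sum of two determinants of network matrices, whence |det| <= 2. This bounds every
  square submatrix. *)

definition network_col :: "nat \<Rightarrow> (nat \<Rightarrow> int) \<Rightarrow> bool" where
  "network_col n v \<longleftrightarrow> (\<forall>i<n. v i \<in> {-1, 0, 1}) \<and>
     (\<forall>i<n. \<forall>i'<n. i \<noteq> i' \<longrightarrow> v i \<noteq> 0 \<longrightarrow> v i' \<noteq> 0 \<longrightarrow> v i + v i' = 0)"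

definition network_mat :: "int mat \<Rightarrow> bool" where
  "network_mat A \<longleftrightarrow> (\<forall>j<dim_col A. network_col (dim_row A) (\<lambda>i. A $$ (i, j)))"

lemma network_col_cong [cong]:
  "n = n' \<Longrightarrow> (\<And>i. i < n' \<Longrightarrow> v i = v' i) \<Longrightarrow> network_col n v = network_col n' v'"
  unfolding network_col_def by auto

lemma network_col_eq_on:
  "network_col n v \<Longrightarrow> (\<And>i. i < n \<Longrightarrow> v' i = v i) \<Longrightarrow> network_col n v'"
  using network_col_cong[of n n v' v] by blast

lemma network_col_reindex:
  assumes "network_col m v" "\<forall>i<n. f i < m" "inj_on f {..<n}"
  shows "network_col n (\<lambda>i. v (f i))"
  unfolding network_col_def
proof (intro conjI allI impI)
  fix i assume "i < n"
  then show "v (f i) \<in> {-1, 0, 1}" using assms unfolding network_col_def by blast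
next
  fix i i' assume "i < n" "i' < n" "i \<noteq> i'" "v (f i) \<noteq> 0" "v (f i') \<noteq> 0"
  moreover have "f i \<noteq> f i'" using inj_on_contraD[OF assms(3)] calculation by simp
  ultimately show "v (f i) + v (f i') = 0" using assms unfolding network_col_def by blast
qed

lemma network_col_unit: "network_col n (\<lambda>k. if k = a then 1 else 0)"
  unfolding network_col_def by auto

lemma network_col_arc: "network_col n (\<lambda>k. if k = a then 1 else if k = b then -1 else 0)"
  unfolding network_col_def by auto

lemma network_col_sum_eq_0:
  assumes "network_col n v" "i < n" "i' < n" "i \<noteq> i'" "v i \<noteq> 0" "v i' \<noteq> 0"
  shows "(\<Sum>k<n. v k) = 0"
proof -
  have zero: "v k = 0" if "k < n" "k \<noteq> i" "k \<noteq> i'" for k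
  proof (rule ccontr)
    assume "v k \<noteq> 0"
    then have "v i + v k = 0" "v i' + v k = 0" "v i + v i' = 0"
      using assms that unfolding network_col_def by blast+
    then show False using assms by simp
  qed
  have "(\<Sum>k<n. v k) = (\<Sum>k\<in>{i, i'}. v k)"
    by (rule sum.mono_neutral_right) (use assms zero in auto)
  also have "\<dots> = 0" using assms unfolding network_col_def by auto
  finally show ?thesis .
qed

lemma network_col_pick:
  assumes "network_col m v" "I \<subseteq> {..<m}"
  shows "network_col (card I) (\<lambda>i. v (pick I i))"
proof (rule network_col_reindex[OF assms(1)])
  show "\<forall>i<card I. pick I i < m" using pick_in_set assms(2) by blast
  show "inj_on (pick I) {..<card I}"
    by (rule inj_onI) (metis lessThan_iff nat_neq_iff pick_mono)
qed

lemma network_mat_mat_delete: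
  assumes "network_mat A"
  shows "network_mat (mat_delete A i j)"
  unfolding network_mat_def
proof (intro allI impI)
  fix j' assume j': "j' < dim_col (mat_delete A i j)"
  have "network_col (dim_row A - 1) (\<lambda>k. A $$ (insert_index i k, insert_index j j'))"
  proof (rule network_col_reindex[where v = "\<lambda>k. A $$ (k, insert_index j j')"])
    show "network_col (dim_row A) (\<lambda>k. A $$ (k, insert_index j j'))"
      using assms j' unfolding network_mat_def insert_index_def by auto
    show "\<forall>k<dim_row A - 1. insert_index i k < dim_row A"
      unfolding insert_index_def by auto
  qed (rule insert_index_inj_on)
  then show "network_col (dim_row (mat_delete A i j)) (\<lambda>k. mat_delete A i j $$ (k, j'))"
    using j' by (simp add: mat_delete_def insert_index_def)
qed

lemma det_eq_0_if_column_sums_eq_0: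
  fixes A :: "'a :: idom mat"
  assumes A: "A \<in> carrier_mat n n" and "0 < n"
    and sums: "\<And>j. j < n \<Longrightarrow> (\<Sum>i<n. A $$ (i, j)) = 0"
  shows "det A = 0"
proof -
  let ?ones = "vec n (\<lambda>_. 1) :: 'a vec"
  have AT: "A\<^sup>T \<in> carrier_mat n n" using A by simp
  have "A\<^sup>T *\<^sub>v ?ones = 0\<^sub>v n"
  proof (rule eq_vecI)
    fix j assume "j < dim_vec (0\<^sub>v n :: 'a vec)"
    then have j: "j < n" by simp
    have "(A\<^sup>T *\<^sub>v ?ones) $ j = (\<Sum>i<n. A $$ (i, j))"
      using A j by (simp add: scalar_prod_def lessThan_atLeast0)
    then show "(A\<^sup>T *\<^sub>v ?ones) $ j = 0\<^sub>v n $ j" using sums[OF j] j by simp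
  qed (use AT in simp)
  moreover have "?ones \<noteq> 0\<^sub>v n"
    using \<open>0 < n\<close> by (metis index_vec index_zero_vec(1) zero_neq_one)
  moreover have "?ones \<in> carrier_vec n" by simp
  ultimately have "det A\<^sup>T = 0"
    using det_0_iff_vec_prod_zero[OF AT] by blast
  then show ?thesis using det_transpose[OF A] by simp
qed

lemma laplace_expansion_column_single:
  fixes A :: "'a :: comm_ring_1 mat"
  assumes A: "A \<in> carrier_mat n n" and "j < n" "i < n"
    and zero: "\<And>k. k < n \<Longrightarrow> k \<noteq> i \<Longrightarrow> A $$ (k, j) = 0"
  shows "det A = A $$ (i, j) * cofactor A i j"
proof -
  have "det A = (\<Sum>k<n. A $$ (k, j) * cofactor A k j)"
    by (rule laplace_expansion_column[OF A \<open>j < n\<close>])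
  also have "\<dots> = (\<Sum>k\<in>{i}. A $$ (k, j) * cofactor A k j)"
    by (rule sum.mono_neutral_right) (use assms in auto)
  finally show ?thesis by simp
qed

lemma det_network_mat_abs_le_1:
  assumes "A \<in> carrier_mat n n" "network_mat A"
  shows "\<bar>det A\<bar> \<le> 1"
  using assms
proof (induction n arbitrary: A)
  case 0
  then show ?case by simp
next
  case (Suc m)
  note A = Suc.prems(1)
  have col: "network_col (Suc m) (\<lambda>i. A $$ (i, j))" if "j < Suc m" for j
    using Suc.prems that unfolding network_mat_def by simp
  show ?case
  proof (cases "\<exists>j<Suc m. \<exists>i<Suc m. \<forall>k<Suc m. k \<noteq> i \<longrightarrow> A $$ (k, j) = 0")
    case True
    then obtain i j where ij: "i < Suc m" "j < Suc m"
      and zero: "\<And>k. k < Suc m \<Longrightarrow> k \<noteq> i \<Longrightarrow> A $$ (k, j) = 0"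
      by blast
    have "\<bar>det (mat_delete A i j)\<bar> \<le> 1"
      using Suc.IH mat_delete_carrier[OF A] network_mat_mat_delete[OF Suc.prems(2)] by simp
    then have "\<bar>cofactor A i j\<bar> \<le> 1"
      unfolding cofactor_def by (simp add: abs_mult power_abs)
    moreover have "\<bar>A $$ (i, j)\<bar> \<le> 1"
      using col[OF ij(2)] ij(1) unfolding network_col_def by auto
    ultimately show ?thesis
      using laplace_expansion_column_single[OF A ij(2,1) zero] by (simp add: abs_mult mult_le_one)
  next
    case False
    have "(\<Sum>i<Suc m. A $$ (i, j)) = 0" if j: "j < Suc m" for j
    proof -
      obtain i where i: "i < Suc m" "A $$ (i, j) \<noteq> 0"
        using False j by blast
      obtain i' where "i' < Suc m" "i' \<noteq> i" "A $$ (i', j) \<noteq> 0"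
        using False j i(1) by blast
      then show ?thesis using network_col_sum_eq_0[OF col[OF j]] i by blast
    qed
    then have "det A = 0" by (rule det_eq_0_if_column_sums_eq_0[OF A zero_less_Suc])
    then show ?thesis by simp
  qed
qed

lemma det_split_column:
  fixes A :: "'a :: comm_ring_1 mat"
  assumes A: "A \<in> carrier_mat n n" and j: "j < n" and uw: "\<And>i. i < n \<Longrightarrow> A $$ (i, j) = u i + w i"
  shows "det A = det (mat n n (\<lambda>(i, k). if k = j then u i else A $$ (i, k)))
               + det (mat n n (\<lambda>(i, k). if k = j then w i else A $$ (i, k)))"
proof -
  define with_col where "with_col v = mat n n (\<lambda>(i, k). if k = j then v i else A $$ (i, k))" for v
  have carrier: "with_col v \<in> carrier_mat n n" for v
    by (simp add: with_col_def)
  have delete: "mat_delete (with_col v) i j = mat_delete A i j" for v i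
    by (rule eq_matI) (use A in \<open>auto simp: mat_delete_def with_col_def\<close>)
  have laplace: "det (with_col v) = (\<Sum>i<n. v i * cofactor A i j)" for v
    using laplace_expansion_column[OF carrier j] j
    by (simp add: cofactor_def delete) (simp add: with_col_def)
  have "det A = (\<Sum>i<n. A $$ (i, j) * cofactor A i j)"
    by (rule laplace_expansion_column[OF A j])
  also have "\<dots> = (\<Sum>i<n. u i * cofactor A i j) + (\<Sum>i<n. w i * cofactor A i j)"
    unfolding sum.distrib[symmetric] using uw by (intro sum.cong) (auto simp: distrib_right)
  also have "\<dots> = det (with_col u) + det (with_col w)"
    by (simp add: laplace)
  finally show ?thesis unfolding with_col_def .
qed

lemma det_subtract_column:
  fixes A :: "'a :: comm_ring_1 mat"
  assumes A: "A \<in> carrier_mat n n" and p: "p < n" and T: "T \<subseteq> {..<n}" "p \<notin> T"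
  shows "det (mat n n (\<lambda>(i, k). if k \<in> T then A $$ (i, k) - A $$ (i, p) else A $$ (i, k))) = det A"
proof -
  have "finite T" using T(1) finite_subset by blast
  then show ?thesis
    using T
  proof (induction T rule: finite_induct)
    case empty
    have "mat n n (\<lambda>(i, k). if k \<in> {} then A $$ (i, k) - A $$ (i, p) else A $$ (i, k)) = A"
      by (rule eq_matI) (use A in auto)
    then show ?case by simp
  next
    case (insert t T)
    let ?M = "mat n n (\<lambda>(i, k). if k \<in> T then A $$ (i, k) - A $$ (i, p) else A $$ (i, k))"
    have "mat n n (\<lambda>(i, k). if k \<in> insert t T then A $$ (i, k) - A $$ (i, p) else A $$ (i, k))
          = addcol (-1) t p ?M"
      by (rule eq_matI) (use insert p in \<open>auto simp: mat_addcol_def\<close>)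
    also have "det \<dots> = det ?M"
      by (rule det_addcol) (use insert p in auto)
    also have "\<dots> = det A" using insert by simp
    finally show ?case .
  qed
qed

definition network_split_mat :: "nat set \<Rightarrow> int mat \<Rightarrow> bool" where
  "network_split_mat S A \<longleftrightarrow>
     (\<forall>j<dim_col A. j \<notin> S \<longrightarrow> network_col (dim_row A) (\<lambda>i. A $$ (i, j))) \<and>
     (\<forall>j<dim_col A. \<forall>j'<dim_col A. j \<in> S \<longrightarrow> j' \<in> S \<longrightarrow>
        network_col (dim_row A) (\<lambda>i. A $$ (i, j) - A $$ (i, j'))) \<and>
     (\<forall>j<dim_col A. j \<in> S \<longrightarrow> (\<exists>u w. network_col (dim_row A) u \<and> network_col (dim_row A) w \<and>
        (\<forall>i<dim_row A. A $$ (i, j) = u i + w i)))"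

lemma network_split_matD:
  assumes "network_split_mat S A" "j < dim_col A"
  shows network_split_mat_col: "j \<notin> S \<Longrightarrow> network_col (dim_row A) (\<lambda>i. A $$ (i, j))"
    and network_split_mat_col_diff: "j' < dim_col A \<Longrightarrow> j \<in> S \<Longrightarrow> j' \<in> S \<Longrightarrow>
      network_col (dim_row A) (\<lambda>i. A $$ (i, j) - A $$ (i, j'))"
    and network_split_mat_col_sum: "j \<in> S \<Longrightarrow> \<exists>u w. network_col (dim_row A) u \<and>
      network_col (dim_row A) w \<and> (\<forall>i<dim_row A. A $$ (i, j) = u i + w i)"
  using assms unfolding network_split_mat_def by blast+

lemma det_abs_le_2_if_network_but_split_column:
  assumes M: "M \<in> carrier_mat n n" and p: "p < n"
    and cols: "\<And>k. k < n \<Longrightarrow> k \<noteq> p \<Longrightarrow> network_col n (\<lambda>i. M $$ (i, k))"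
    and u: "network_col n u" and w: "network_col n w"
    and uw: "\<And>i. i < n \<Longrightarrow> M $$ (i, p) = u i + w i"
  shows "\<bar>det M\<bar> \<le> 2"
proof -
  define with_col where "with_col v = mat n n (\<lambda>(i, k). if k = p then v i else M $$ (i, k))" for v
  have bound: "\<bar>det (with_col v)\<bar> \<le> 1" if "network_col n v" for v
  proof (rule det_network_mat_abs_le_1)
    show "with_col v \<in> carrier_mat n n" by (simp add: with_col_def)
    show "network_mat (with_col v)"
      unfolding network_mat_def
    proof (intro allI impI)
      fix j assume "j < dim_col (with_col v)"
      then show "network_col (dim_row (with_col v)) (\<lambda>i. with_col v $$ (i, j))"
        using that cols[of j] by (cases "j = p") (simp_all add: with_col_def)
    qed
  qed
  have "det M = det (with_col u) + det (with_col w)"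
    unfolding with_col_def by (rule det_split_column[OF M p uw])
  then show ?thesis
    using bound[OF u] bound[OF w] abs_triangle_ineq[of "det (with_col u)" "det (with_col w)"]
    by linarith
qed

lemma det_network_split_mat_abs_le_2:
  assumes M: "M \<in> carrier_mat n n" and split: "network_split_mat S M"
  shows "\<bar>det M\<bar> \<le> 2"
proof (cases "\<exists>p<n. p \<in> S")
  case False
  then have "network_mat M"
    using network_split_mat_col[OF split] M unfolding network_mat_def by auto
  then show ?thesis using det_network_mat_abs_le_1[OF M] by simp
next
  case True
  then obtain p where p: "p < n" "p \<in> S" by blast
  have "\<exists>u w. network_col n u \<and> network_col n w \<and> (\<forall>i<n. M $$ (i, p) = u i + w i)"
    using network_split_mat_col_sum[OF split, of p] M p by simp
  then obtain u w where u: "network_col n u" and w: "network_col n w"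
    and uw: "\<And>i. i < n \<Longrightarrow> M $$ (i, p) = u i + w i"
    by blast
  define T where "T = {k. k < n \<and> k \<in> S \<and> k \<noteq> p}"
  define M' where "M' = mat n n (\<lambda>(i, k). if k \<in> T then M $$ (i, k) - M $$ (i, p) else M $$ (i, k))"
  have "det M' = det M"
    unfolding M'_def by (rule det_subtract_column[OF M p(1)]) (auto simp: T_def)
  moreover have "\<bar>det M'\<bar> \<le> 2"
  proof (rule det_abs_le_2_if_network_but_split_column[OF _ p(1) _ u w])
    show "M' \<in> carrier_mat n n" by (simp add: M'_def)
    show "M' $$ (i, p) = u i + w i" if "i < n" for i
      using that p(1) uw by (simp add: M'_def T_def)
    show "network_col n (\<lambda>i. M' $$ (i, k))" if k: "k < n" "k \<noteq> p" for k
    proof (cases "k \<in> S")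
      case True
      then have "network_col n (\<lambda>i. M $$ (i, k) - M $$ (i, p))"
        using network_split_mat_col_diff[OF split] M p k by auto
      then show ?thesis using k True by (simp add: M'_def T_def)
    next
      case False
      then have "network_col n (\<lambda>i. M $$ (i, k))"
        using network_split_mat_col[OF split] M k by auto
      then show ?thesis using k False by (simp add: M'_def T_def)
    qed
  qed
  ultimately show ?thesis by simp
qed

lemma submatrix_carrier:
  assumes "I \<subseteq> {..<dim_row A}" "J \<subseteq> {..<dim_col A}"
  shows "submatrix A I J \<in> carrier_mat (card I) (card J)"
proof (rule carrier_matI)
  have "{i. i < dim_row A \<and> i \<in> I} = I" using assms(1) by blast
  then show "dim_row (submatrix A I J) = card I" by (simp only: dim_submatrix)
  have "{j. j < dim_col A \<and> j \<in> J} = J" using assms(2) by blast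
  then show "dim_col (submatrix A I J) = card J" by (simp only: dim_submatrix)
qed

lemma network_split_mat_submatrix:
  assumes A: "network_split_mat S A" and I: "I \<subseteq> {..<dim_row A}" and J: "J \<subseteq> {..<dim_col A}"
  shows "network_split_mat {j. pick J j \<in> S} (submatrix A I J)"
proof -
  have dims: "dim_row (submatrix A I J) = card I" "dim_col (submatrix A I J) = card J"
    using submatrix_carrier[OF I J] by auto
  have entry: "submatrix A I J $$ (i, j) = A $$ (pick I i, pick J j)"
    if "i < card I" "j < card J" for i j
    using submatrix_index[of i A I j J] that dims by (simp add: dim_submatrix)
  have pick_I: "pick I i < dim_row A" if "i < card I" for i
    using pick_in_set[of i I] that I by auto
  have pick_J: "pick J j < dim_col A" if "j < card J" for j
    using pick_in_set[of j J] that J by auto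
  show ?thesis
    unfolding network_split_mat_def dims
  proof (intro conjI allI impI)
    fix j assume j: "j < card J" "j \<notin> {j. pick J j \<in> S}"
    then have "network_col (dim_row A) (\<lambda>k. A $$ (k, pick J j))"
      using network_split_mat_col[OF A pick_J] by simp
    from network_col_pick[OF this I]
    show "network_col (card I) (\<lambda>i. submatrix A I J $$ (i, j))"
      by (rule network_col_eq_on) (simp add: entry j)
  next
    fix j j' assume j: "j < card J" "j' < card J" "j \<in> {j. pick J j \<in> S}" "j' \<in> {j. pick J j \<in> S}"
    then have "network_col (dim_row A) (\<lambda>k. A $$ (k, pick J j) - A $$ (k, pick J j'))"
      using network_split_mat_col_diff[OF A pick_J pick_J] by simp
    from network_col_pick[OF this I]
    show "network_col (card I) (\<lambda>i. submatrix A I J $$ (i, j) - submatrix A I J $$ (i, j'))"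
      by (rule network_col_eq_on) (simp add: entry j)
  next
    fix j assume j: "j < card J" "j \<in> {j. pick J j \<in> S}"
    then obtain u w where u: "network_col (dim_row A) u" and w: "network_col (dim_row A) w"
      and uw: "\<forall>k<dim_row A. A $$ (k, pick J j) = u k + w k"
      using network_split_mat_col_sum[OF A pick_J[OF j(1)]] j by blast
    have "\<forall>i<card I. submatrix A I J $$ (i, j) = u (pick I i) + w (pick I i)"
      using uw j pick_I by (simp add: entry)
    then show "\<exists>u w. network_col (card I) u \<and> network_col (card I) w \<and>
        (\<forall>i<card I. submatrix A I J $$ (i, j) = u i + w i)"
      using network_col_pick[OF u I] network_col_pick[OF w I] by blast
  qed
qed

lemma A'_mat_dims:
  "dim_row (A'_mat r) = r" "dim_col (A'_mat r) = r + (r choose 2) + (r - 1)"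
  unfolding A'_mat_def by simp_all

lemma A'_mat_index:
  assumes "k < r" "c < r + (r choose 2) + (r - 1)"
  shows "A'_mat r $$ (k, c) =
    (if c < r then (if k = c then 1 else 0)
     else if c < r + (r choose 2) then
       (if k = fst (pairs_list r ! (c - r)) then 1
        else if k = snd (pairs_list r ! (c - r)) then -1 else 0)
     else if k < 2 then 1 else if k = c - r - (r choose 2) + 2 then -1 else 0)"
  using assms unfolding A'_mat_def D_mat_def B'_mat_def by (auto simp: Let_def)

lemma network_col_B'_col_diff:
  "network_col n (\<lambda>k. (if k < 2 then 1 else if k = a + 2 then -1 else 0)
                      - (if k < 2 then 1 else if k = b + 2 then -1 else 0))"
proof (cases "a = b")
  case True
  then show ?thesis by (simp add: network_col_def)
next
  case False
  then have arc: "(\<lambda>k. (if k < 2 then 1 else if k = a + 2 then -1 else 0)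
                 - (if k < 2 then 1 else if k = b + 2 then -1 else 0) :: int)
           = (\<lambda>k. if k = b + 2 then 1 else if k = a + 2 then -1 else 0)"
    by auto
  show ?thesis unfolding arc by (rule network_col_arc)
qed

lemma network_split_mat_A'_mat: "network_split_mat {r + (r choose 2)..} (A'_mat r)"
  unfolding network_split_mat_def A'_mat_dims
proof (intro conjI allI impI)
  fix c assume c: "c < r + (r choose 2) + (r - 1)" "c \<notin> {r + (r choose 2)..}"
  show "network_col r (\<lambda>k. A'_mat r $$ (k, c))"
    using c by (cases "c < r") (simp_all add: A'_mat_index network_col_unit network_col_arc)
next
  fix c d assume "c < r + (r choose 2) + (r - 1)" "d < r + (r choose 2) + (r - 1)"
    "c \<in> {r + (r choose 2)..}" "d \<in> {r + (r choose 2)..}"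
  then show "network_col r (\<lambda>k. A'_mat r $$ (k, c) - A'_mat r $$ (k, d))"
    by (simp add: A'_mat_index network_col_B'_col_diff)
next
  fix c assume c: "c < r + (r choose 2) + (r - 1)" "c \<in> {r + (r choose 2)..}"
  let ?u = "\<lambda>k. if k = 0 then 1 else 0"
  let ?w = "\<lambda>k. if k = 1 then 1 else if k = c - r - (r choose 2) + 2 then -1 else 0"
  have "\<forall>k<r. A'_mat r $$ (k, c) = ?u k + ?w k"
    using c by (auto simp: A'_mat_index)
  then show "\<exists>u w. network_col r u \<and> network_col r w \<and> (\<forall>k<r. A'_mat r $$ (k, c) = u k + w k)"
    using network_col_unit network_col_arc by blast
qed

(* The bound holds for every r. *)
theorem lemma3p2:
  fixes r :: nat
  assumes "r \<ge> 2"
  shows "delta_modular 2 (A'_mat r)"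
  unfolding delta_modular_def
proof (intro allI impI)
  fix I J
  assume I: "I \<subseteq> {..<dim_row (A'_mat r)}" and J: "J \<subseteq> {..<dim_col (A'_mat r)}"
    and "card I = int_mat_rank (A'_mat r)" "card J = int_mat_rank (A'_mat r)"
  then have "submatrix (A'_mat r) I J \<in> carrier_mat (card I) (card I)"
    using submatrix_carrier[OF I J] by simp
  moreover have "network_split_mat {j. pick J j \<in> {r + (r choose 2)..}} (submatrix (A'_mat r) I J)"
    using network_split_mat_submatrix[OF network_split_mat_A'_mat I J] .
  ultimately show "\<bar>det (submatrix (A'_mat r) I J)\<bar> \<le> 2"
    by (rule det_network_split_mat_abs_le_2)
qed

end
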